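(* Fix $b\in(0,1)$ and $N>0$, and let $z_1,\dots,z_N$ be (small) complex numbers with $|bz_i|<1$ for all $i$ and $1-(1+b)z_i+bz_iz_j\neq0$ for all $i\neq j$. For $\sigma\in\mathfrak{S}(N)$ define \[A_\sigma=(-1)^\sigma\prod_{i<j}\frac{1-(1+b)z_{\sigma(i)}+bz_{\sigma(i)}z_{\sigma(j)}}{1-(1+b)z_i+bz_iz_j},\qquad \Phi(x_1,\dots,x_N;z_1,\dots,z_N)=\sum_{\sigma\in\mathfrak{S}(N)}A_\sigma\prod_{i=1}^Nz_{\sigma(i)}^{x_i}.\] Then for every $t\ge0$ and $\vec x\in X^N$, \[\sum_{\vec y\in X^N}\mathcal{T}^{(N)}_t(\vec x\to\vec y)\Phi(\vec y;z_1,\dots,z_N)=\exp\left(-t\sum_{i=1}^N\frac{1-z_i}{1-bz_i}\right)\Phi(\vec x;z_1,\dots,z_N).\]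
   Context: $X^N=\{\vec x=(x_1<x_2<\dots<x_N): x_i\in\mathbb{Z}_{\geq0}\}$ is the state space of $N$-particle HL-PushTASEP on $\mathbb{Z}_{\geq0}$ with parameter $b$, and $\mathcal{T}^{(N)}_t(\vec x\to\vec y)$ is its transition probability from $\vec x$ to $\vec y$ in time $t$. Dynamics: each particle has an independent rate-$1$ exponential clock; when the clock of the particle at $x_m$ rings, it jumps $j$ steps to the right with probability $(1-b)b^{j-1}$ for $1\leq j<x_{m+1}-x_m$, and with probability $b^{x_{m+1}-x_m-1}$ it reaches $x_{m+1}$, occupies it, and the particle previously at $x_{m+1}$ is instantaneously activated and moves by the same rule (the rightmost particle has no right neighbour, $x_{N+1}=+\infty$). $(-1)^\sigma$ is the sign of $\sigma$. *)

theory Defs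
  imports "HOL-Analysis.Analysis" "HOL-Combinatorics.Permutations"
begin

text \<open>States of N-particle HL-PushTASEP: strictly increasing lists of length N
  (particles indexed 0..N-1 instead of 1..N).\<close>
definition XN :: "nat \<Rightarrow> nat list set" where
  "XN N = {xs. length xs = N \<and> sorted_wrt (<) xs}"

text \<open>Probability that, when the clock of particle m rings in state xs,
  the resulting state is ys (including the cascade of pushes).\<close>
function push_move :: "real \<Rightarrow> nat \<Rightarrow> nat list \<Rightarrow> nat list \<Rightarrow> real" where
  "push_move b m xs ys =
    (if length ys \<noteq> length xs \<or> m \<ge> length xs then 0
     else if Suc m = length xs then
       (if xs ! m < ys ! m \<and> ys = xs[m := ys ! m]
        then (1 - b) * b ^ (ys ! m - xs ! m - 1) else 0)
     else
       (if xs ! m < ys ! m \<and> ys ! m < xs ! Suc m \<and> ys = xs[m := ys ! m]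
        then (1 - b) * b ^ (ys ! m - xs ! m - 1)
        else if ys ! m = xs ! Suc m
        then b ^ (xs ! Suc m - xs ! m - 1) * push_move b (Suc m) (xs[m := xs ! Suc m]) ys
        else 0))"
  by pat_completeness auto
termination
  by (relation "Wellfounded.measure (\<lambda>(b, m, xs, ys). length xs - m)") auto

text \<open>Jump chain: each of the N rate-1 clocks rings with probability 1/N.
  Since every ring moves the configuration, the number of moves up to time t
  is Poisson(N t).\<close>
definition jump_kernel :: "real \<Rightarrow> nat \<Rightarrow> nat list \<Rightarrow> nat list \<Rightarrow> real" where
  "jump_kernel b N xs ys = (\<Sum>m<N. push_move b m xs ys) / real N"

fun jump_kernel_pow :: "real \<Rightarrow> nat \<Rightarrow> nat \<Rightarrow> nat list \<Rightarrow> nat list \<Rightarrow> real" where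
  "jump_kernel_pow b N 0 xs ys = (if xs = ys then 1 else 0)"
| "jump_kernel_pow b N (Suc n) xs ys =
     (\<Sum>\<^sub>\<infinity>ws\<in>XN N. jump_kernel_pow b N n xs ws * jump_kernel b N ws ys)"

definition trans_prob :: "real \<Rightarrow> nat \<Rightarrow> real \<Rightarrow> nat list \<Rightarrow> nat list \<Rightarrow> real" where
  "trans_prob b N t xs ys =
     (\<Sum>\<^sub>\<infinity>n\<in>UNIV. exp (- real N * t) * (real N * t) ^ n / fact n * jump_kernel_pow b N n xs ys)"

definition Afac :: "real \<Rightarrow> complex \<Rightarrow> complex \<Rightarrow> complex" where
  "Afac b u v = 1 - (1 + complex_of_real b) * u + complex_of_real b * u * v"

definition A_coef :: "real \<Rightarrow> nat \<Rightarrow> (nat \<Rightarrow> complex) \<Rightarrow> (nat \<Rightarrow> nat) \<Rightarrow> complex" where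
  "A_coef b N z \<sigma> = of_int (sign \<sigma>) *
     (\<Prod>(i, j)\<in>{(i, j). i < j \<and> j < N}.
        Afac b (z (\<sigma> i)) (z (\<sigma> j)) / Afac b (z i) (z j))"

definition Phi :: "real \<Rightarrow> nat \<Rightarrow> nat list \<Rightarrow> (nat \<Rightarrow> complex) \<Rightarrow> complex" where
  "Phi b N xs z = (\<Sum>\<sigma>\<in>{\<sigma>. \<sigma> permutes {..<N}}.
     A_coef b N z \<sigma> * (\<Prod>i<N. z (\<sigma> i) ^ (xs ! i)))"

end

theory Submission
  imports Defs
begin

text \<open>When the clock of particle \<open>m\<close> rings in state \<open>x\<close>, the expected value of a monomial
  \<open>w ^ y = \<Prod>\<^sub>i w\<^sub>i ^ y\<^sub>i\<close> after the move is a geometric series: it equals \<open>\<phi>(w\<^sub>m) w ^ x\<close> with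
  \<open>\<phi>(u) = (1 - b) u / (1 - b u)\<close>, plus a defect for every push in the cascade.  A push of
  particle \<open>k\<close> onto particle \<open>k + 1\<close> leaves a configuration with \<open>y\<^sub>k = y\<^sub>k\<^sub>+\<^sub>1\<close>, and its defect
  is a multiple of \<open>1 - (1 + b) w\<^sub>k\<^sub>+\<^sub>1 + b w\<^sub>k\<^sub>+\<^sub>1 w\<^sub>k\<close>.  Under the adjacent transposition of
  \<open>k, k + 1\<close> the coefficient \<open>A\<^sub>\<sigma>\<close> exchanges exactly this factor for its mirror image and changes
  sign, so in \<open>\<Phi>(y) = \<Sum>\<^sub>\<sigma> A\<^sub>\<sigma> (z \<circ> \<sigma>) ^ y\<close> all defects cancel: \<open>\<Phi>\<close> is an eigenfunction of the
  jump chain with eigenvalue \<open>(1/N) \<Sum>\<^sub>i \<phi>(z\<^sub>i)\<close>.  Poissonisation of the number of rings turns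
  the powers of the eigenvalue into \<open>exp (-t \<Sum>\<^sub>i (1 - \<phi>(z\<^sub>i)))\<close>, and
  \<open>1 - \<phi>(u) = (1 - u)/(1 - b u)\<close>.  All interchanges of summation are justified by dominating
  \<open>|\<Phi>(y)|\<close> by the weight \<open>R ^ (y\<^sub>1 + \<dots> + y\<^sub>N)\<close>, where \<open>|z\<^sub>i| \<le> R\<close> and \<open>b R < 1\<close>; this weight
  grows at most geometrically along the jump chain.\<close>

declare push_move.simps [simp del]

section \<open>Infinite sums\<close>

lemma has_sum_UNIV_from_image:
  assumes "inj_on h S" "\<And>y. y \<notin> h ` S \<Longrightarrow> f y = 0" "((\<lambda>v. f (h v)) has_sum s) S"
  shows "(f has_sum s) UNIV"
proof -
  have "(f has_sum s) (h ` S)"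
    using has_sum_reindex[OF assms(1), of f s] assms(3) by (simp add: o_def)
  then show ?thesis
    by (rule has_sum_cong_neutral[THEN iffD1, rotated -1]) (use assms(2) in auto)
qed

lemma has_sum_sum:
  fixes f :: "'i \<Rightarrow> 'a \<Rightarrow> 'b::topological_comm_monoid_add"
  assumes "finite I" "\<And>i. i \<in> I \<Longrightarrow> (f i has_sum s i) A"
  shows "((\<lambda>x. \<Sum>i\<in>I. f i x) has_sum (\<Sum>i\<in>I. s i)) A"
  using assms by (induction I rule: finite_induct) (simp_all add: has_sum_add)

lemma has_sum_swap_dominated:
  fixes f :: "'a \<Rightarrow> 'b \<Rightarrow> 'c::banach"
  assumes g: "(\<lambda>(a, b). g a b) summable_on A \<times> B"
    and dom: "\<And>a b. a \<in> A \<Longrightarrow> b \<in> B \<Longrightarrow> norm (f a b) \<le> g a b"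
    and rows: "\<And>a. a \<in> A \<Longrightarrow> ((\<lambda>b. f a b) has_sum r a) B" and r: "(r has_sum s) A"
    and cols: "\<And>b. b \<in> B \<Longrightarrow> ((\<lambda>a. f a b) has_sum c b) A"
  shows "(c has_sum s) B"
proof -
  have "(\<lambda>(a, b). f a b) summable_on A \<times> B"
    by (rule abs_summable_summable, rule Infinite_Sum.abs_summable_on_comparison_test'[OF g])
      (use dom in auto)
  then obtain T where T: "((\<lambda>(a, b). f a b) has_sum T) (Sigma A (\<lambda>_. B))"
    by (auto simp: summable_on_def)
  have "(r has_sum T) A"
    using has_sum_SigmaD[OF T] rows by simp
  with r have "T = s"
    using has_sum_unique by blast
  from T have "((\<lambda>(b, a). f a b) has_sum T) (Sigma B (\<lambda>_. A))"
    by (subst (asm) has_sum_swap) simp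
  then have "(c has_sum T) B"
    by (rule has_sum_SigmaD) (use cols in simp)
  with \<open>T = s\<close> show ?thesis
    by simp
qed

lemma summable_on_Sigma_column:
  fixes k :: "'a \<Rightarrow> 'b \<Rightarrow> real"
  assumes "(\<lambda>(a, b). k a b * h b) summable_on A \<times> B" "b \<in> B" "0 < h b"
  shows "(\<lambda>a. k a b) summable_on A"
proof -
  have "(\<lambda>(b, a). k a b * h b) summable_on Sigma B (\<lambda>_. A)"
    using assms(1) by (subst (asm) summable_on_swap) (simp add: case_prod_unfold)
  from summable_on_SigmaD1[OF this assms(2)] have "(\<lambda>a. k a b * h b) summable_on A"
    by simp
  with assms(3) show ?thesis
    using summable_on_cmult_left'[of "h b" "\<lambda>a. k a b" A] by simp
qed

lemma one_minus_nonzero: "norm (u::'a::real_normed_algebra_1) < 1 \<Longrightarrow> 1 - u \<noteq> 0"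
  by auto

lemma sum_geometric_between:
  fixes w :: "'a::real_normed_field"
  assumes "a < c"
  shows "(\<Sum>v\<in>{a<..<c}. of_real (b ^ (v - a - 1)) * w ^ v) * (1 - of_real b * w)
    = w ^ Suc a - of_real (b ^ (c - a - 1)) * w ^ c"
proof -
  obtain d where c: "c = Suc a + d"
    using assms less_iff_Suc_add by blast
  show ?thesis
    unfolding c
  proof (induction d)
    case 0
    have "{a<..<Suc a} = {}"
      by auto
    then show ?case by simp
  next
    case (Suc d)
    define S where "S = (\<Sum>v\<in>{a<..<Suc a + d}. of_real (b ^ (v - a - 1)) * w ^ v)"
    have "{a<..<Suc a + Suc d} = insert (Suc a + d) {a<..<Suc a + d}"
      by auto
    then have "(\<Sum>v\<in>{a<..<Suc a + Suc d}. of_real (b ^ (v - a - 1)) * w ^ v) * (1 - of_real b * w)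
        = of_real (b ^ d) * w ^ (Suc a + d) * (1 - of_real b * w) + S * (1 - of_real b * w)"
      unfolding S_def by (simp add: distrib_right)
    also have "S * (1 - of_real b * w) = w ^ Suc a - of_real (b ^ d) * w ^ (Suc a + d)"
      using Suc unfolding S_def by simp
    finally show ?case
      by (simp add: algebra_simps)
  qed
qed

lemma has_sum_poisson_exp:
  fixes c :: "'a::{real_normed_field,banach}"
  shows "((\<lambda>n. of_real (exp (- s) * (s ^ n / fact n)) * c ^ n) has_sum exp (of_real s * (c - 1))) UNIV"
proof -
  have "((\<lambda>n. (of_real s * c) ^ n /\<^sub>R fact n) has_sum exp (of_real s * c)) UNIV"
    using summable_exp[of "norm (of_real s * c)"]
    by (intro norm_summable_imp_has_sum exp_converges) (simp add: norm_power divide_inverse mult_ac)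
  from has_sum_cmult_right[OF this, of "of_real (exp (- s))"]
  show ?thesis
    by (simp add: scaleR_conv_of_real power_mult_distrib divide_inverse exp_of_real[symmetric]
        mult_exp_exp algebra_simps)
qed

section \<open>The pushing dynamics\<close>

definition increasing_from :: "nat \<Rightarrow> nat list \<Rightarrow> bool" where
  "increasing_from m x \<longleftrightarrow> (\<forall>i. m \<le> i \<longrightarrow> Suc i < length x \<longrightarrow> x ! i < x ! Suc i)"

lemma XN_iff: "x \<in> XN N \<longleftrightarrow> length x = N \<and> increasing_from 0 x"
  unfolding XN_def increasing_from_def by (auto simp: sorted_wrt_iff_nth_Suc_transp)

lemma push_move_nonzeroD:
  "push_move b m x y \<noteq> 0 \<Longrightarrow> length y = length x \<and> m < length x \<and> (\<forall>i<m. y ! i = x ! i)"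
proof (induction b m x y rule: push_move.induct)
  case (1 b m x y)
  show ?case
  proof (cases "length y \<noteq> length x \<or> length x \<le> m \<or> Suc m = length x
      \<or> (x ! m < y ! m \<and> y ! m < x ! Suc m \<and> y = x[m := y ! m])")
    case True
    with "1.prems" show ?thesis
      by (subst (asm) push_move.simps) (auto split: if_splits, (metis nth_list_update_neq nat_neq_iff)+)
  next
    case False
    with "1.prems" have "y ! m = x ! Suc m" "push_move b (Suc m) (x[m := x ! Suc m]) y \<noteq> 0"
      by (subst (asm) push_move.simps; auto split: if_splits)+
    with "1.IH" False show ?thesis
      by (auto simp: nth_list_update)
  qed
qed

definition free_jump :: "real \<Rightarrow> nat \<Rightarrow> nat list \<Rightarrow> nat list \<Rightarrow> real" where
  "free_jump b m x y =
     (if x ! m < y ! m \<and> (Suc m < length x \<longrightarrow> y ! m < x ! Suc m) \<and> y = x[m := y ! m]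
      then (1 - b) * b ^ (y ! m - x ! m - 1) else 0)"

text \<open>For the rightmost particle \<open>x ! Suc m\<close> is a junk value, but then the second
  summand vanishes anyway because \<open>push_move\<close> is zero for \<open>length x \<le> Suc m\<close>.\<close>
lemma push_move_split:
  assumes "m < length x"
  shows "push_move b m x y =
    free_jump b m x y + b ^ (x ! Suc m - x ! m - 1) * push_move b (Suc m) (x[m := x ! Suc m]) y"
proof (cases "length y = length x")
  case False
  then have "free_jump b m x y = 0"
    unfolding free_jump_def by (metis length_list_update)
  with False show ?thesis
    using push_move_nonzeroD[of b m x y] push_move_nonzeroD[of b "Suc m" "x[m := x ! Suc m]" y]
    by force
next
  case len: True
  show ?thesis
  proof (cases "Suc m < length x")
    case True
    have "push_move b (Suc m) (x[m := x ! Suc m]) y = 0" if "y ! m \<noteq> x ! Suc m"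
      using push_move_nonzeroD[of b "Suc m" "x[m := x ! Suc m]" y] that True
      by (metis Suc_lessD lessI nth_list_update_eq)
    with len True show ?thesis
      by (subst push_move.simps[of b m x y]) (auto simp: free_jump_def)
  next
    case False
    then have "push_move b (Suc m) (x[m := x ! Suc m]) y = 0"
      using push_move_nonzeroD by fastforce
    with len False assms show ?thesis
      by (subst push_move.simps[of b m x y]) (auto simp: free_jump_def)
  qed
qed

lemma push_move_nonneg: "0 \<le> b \<Longrightarrow> b \<le> 1 \<Longrightarrow> 0 \<le> push_move b m x y"
proof (induction b m x y rule: push_move.induct)
  case (1 b m x y)
  show ?case
    by (subst push_move.simps, simp only: split: if_split) (use 1 in \<open>intro conjI impI; simp\<close>)
qed

lemma push_move_increasing:
  "push_move b m x y \<noteq> 0 \<Longrightarrow> increasing_from m x \<Longrightarrow> x ! m < y ! m \<and> increasing_from m y"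
proof (induction "length x - m" arbitrary: m x rule: less_induct)
  case less
  from push_move_nonzeroD[OF less.prems(1)]
  have len: "length y = length x" "m < length x" by auto
  from less.prems(1) consider "free_jump b m x y \<noteq> 0"
    | "push_move b (Suc m) (x[m := x ! Suc m]) y \<noteq> 0"
    unfolding push_move_split[OF len(2)] by fastforce
  then show ?case
  proof cases
    case 1
    then obtain v where y: "y = x[m := v]" and v: "x ! m < v" "Suc m < length x \<Longrightarrow> v < x ! Suc m"
      using that[of "y ! m"] unfolding free_jump_def by (auto split: if_splits)
    have "y ! i < y ! Suc i" if "m \<le> i" "Suc i < length y" for i
      using that v less.prems(2) len unfolding y increasing_from_def
      by (cases "i = m") auto
    with y v len show ?thesis
      unfolding increasing_from_def by auto
  next
    case 2
    let ?x' = "x[m := x ! Suc m]"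
    have inner: "Suc m < length x"
      using push_move_nonzeroD[OF 2] by simp
    have "increasing_from (Suc m) ?x'"
      using less.prems(2) unfolding increasing_from_def by auto
    with less.hyps[of ?x' "Suc m"] 2 inner
    have IH: "x ! Suc m < y ! Suc m" "increasing_from (Suc m) y" by auto
    have "y ! m = x ! Suc m"
      using push_move_nonzeroD[OF 2] inner by auto
    moreover have "x ! m < x ! Suc m"
      using less.prems(2) inner unfolding increasing_from_def by auto
    ultimately have "y ! i < y ! Suc i" if "m \<le> i" "Suc i < length y" for i
      using IH that unfolding increasing_from_def by (cases "i = m") auto
    with \<open>y ! m = x ! Suc m\<close> \<open>x ! m < x ! Suc m\<close> show ?thesis
      unfolding increasing_from_def by auto
  qed
qed

lemma push_move_XN: "x \<in> XN N \<Longrightarrow> push_move b m x y \<noteq> 0 \<Longrightarrow> y \<in> XN N"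
proof -
  assume x: "x \<in> XN N" and nz: "push_move b m x y \<noteq> 0"
  have inc: "increasing_from 0 x"
    using x by (simp add: XN_iff)
  then have "increasing_from m x"
    by (simp add: increasing_from_def)
  with nz have "x ! m < y ! m" "increasing_from m y"
    by (auto dest: push_move_increasing)
  moreover have "length y = length x" "\<forall>i<m. y ! i = x ! i"
    using push_move_nonzeroD[OF nz] by auto
  ultimately have "y ! i < y ! Suc i" if "Suc i < length y" for i
    using inc that unfolding increasing_from_def
    by (cases "m \<le> i"; cases "Suc i = m") auto
  then have "increasing_from 0 y"
    unfolding increasing_from_def by blast
  with x \<open>length y = length x\<close> show "y \<in> XN N"
    by (simp add: XN_iff)
qed

lemma jump_kernel_nonneg: "0 \<le> b \<Longrightarrow> b \<le> 1 \<Longrightarrow> 0 \<le> jump_kernel b N x y"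
  unfolding jump_kernel_def by (intro divide_nonneg_nonneg sum_nonneg push_move_nonneg) auto

lemma jump_kernel_pow_nonneg: "0 \<le> b \<Longrightarrow> b \<le> 1 \<Longrightarrow> 0 \<le> jump_kernel_pow b N n x y"
  by (induction n arbitrary: y) (auto intro!: infsum_nonneg mult_nonneg_nonneg jump_kernel_nonneg)

lemma jump_kernel_has_sum:
  fixes f :: "nat list \<Rightarrow> 'a::real_normed_field"
  assumes x: "x \<in> XN N" and push: "\<And>m. m < N \<Longrightarrow> ((\<lambda>y. of_real (push_move b m x y) * f y) has_sum s m) UNIV"
  shows "((\<lambda>y. of_real (jump_kernel b N x y) * f y) has_sum ((\<Sum>m<N. s m) / of_nat N)) (XN N)"
proof -
  have sum: "((\<lambda>y. (\<Sum>m<N. of_real (push_move b m x y) * f y) / of_nat N) has_sum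
      ((\<Sum>m<N. s m) / of_nat N)) UNIV"
    using push by (intro has_sum_divide_const has_sum_sum) auto
  have "push_move b m x y = 0" if "y \<notin> XN N" for m y
    using push_move_XN[OF x] that by blast
  then show ?thesis
    unfolding jump_kernel_def
    by (intro has_sum_cong_neutral[THEN iffD1, OF _ _ _ sum]) (auto simp: sum_distrib_right)
qed

section \<open>One clock acting on a monomial\<close>

definition monomial :: "(nat \<Rightarrow> 'a::comm_semiring_1) \<Rightarrow> nat list \<Rightarrow> 'a" where
  "monomial w y = (\<Prod>i<length y. w i ^ (y ! i))"

definition monomial_except :: "(nat \<Rightarrow> 'a::comm_semiring_1) \<Rightarrow> nat list \<Rightarrow> nat \<Rightarrow> 'a" where
  "monomial_except w y m = (\<Prod>i\<in>{..<length y} - {m}. w i ^ (y ! i))"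

lemma monomial_split: "m < length x \<Longrightarrow> monomial w x = monomial_except w x m * w m ^ (x ! m)"
  unfolding monomial_def monomial_except_def by (subst prod.remove[of _ m]) (auto simp: mult.commute)

lemma monomial_except_update: "monomial_except w (x[m := v]) m = monomial_except w x m"
  unfolding monomial_except_def by (intro prod.cong) auto

lemma monomial_update: "m < length x \<Longrightarrow> monomial w (x[m := v]) = monomial_except w x m * w m ^ v"
  using monomial_split[of m "x[m := v]" w] by (simp add: monomial_except_update)

text \<open>The generating function \<open>\<Sum>\<^bsub>j \<ge> 1\<^esub> (1 - b) b ^ (j - 1) u ^ j\<close> of the length of a free jump.\<close>
definition jump_gf :: "real \<Rightarrow> 'a::real_normed_field \<Rightarrow> 'a" where
  "jump_gf b u = of_real (1 - b) * u / (1 - of_real b * u)"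

lemma one_minus_jump_gf:
  fixes u :: "'a::real_normed_field"
  shows "1 - of_real b * u \<noteq> 0 \<Longrightarrow> 1 - jump_gf b u = (1 - u) / (1 - of_real b * u)"
  unfolding jump_gf_def by (simp add: field_simps)

text \<open>When particle \<open>m\<close> (weight \<open>u\<close>) is pushed onto particle \<open>m + 1\<close> (weight \<open>v\<close>), the
  continuation of the move contributes \<open>jump_gf b v\<close>, while the free jumps of particle \<open>m\<close>, cut off
  at its neighbour, lose \<open>(1 - b)/(1 - b u)\<close>.\<close>
definition push_defect :: "real \<Rightarrow> 'a::real_normed_field \<Rightarrow> 'a \<Rightarrow> 'a" where
  "push_defect b u v = jump_gf b v - of_real (1 - b) / (1 - of_real b * u)"

function cascade_defect :: "real \<Rightarrow> (nat \<Rightarrow> 'a::real_normed_field) \<Rightarrow> nat \<Rightarrow> nat list \<Rightarrow> 'a" where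
  "cascade_defect b w m x =
    (if Suc m < length x then
       of_real (b ^ (x ! Suc m - x ! m - 1)) *
         (push_defect b (w m) (w (Suc m)) * monomial w (x[m := x ! Suc m])
          + cascade_defect b w (Suc m) (x[m := x ! Suc m]))
     else 0)"
  by pat_completeness auto
termination
  by (relation "Wellfounded.measure (\<lambda>(b, w, m, x). length x - m)") auto

declare cascade_defect.simps [simp del]

lemma cascade_defect_last: "\<not> Suc m < length x \<Longrightarrow> cascade_defect b w m x = 0"
  by (simp add: cascade_defect.simps)

lemma has_sum_jump_gf:
  fixes w :: "'a::{real_normed_field,banach}"
  assumes "norm (of_real b * w) < 1"
  shows "((\<lambda>j. of_real ((1 - b) * b ^ j) * w ^ (Suc a + j)) has_sum (jump_gf b w * w ^ a)) UNIV"
proof -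
  have "((\<lambda>j. (of_real b * w) ^ j) has_sum (1 / (1 - of_real b * w))) UNIV"
    using assms by (intro norm_summable_imp_has_sum geometric_sums)
      (simp_all add: norm_power summable_geometric)
  from has_sum_cmult_right[OF this, of "of_real (1 - b) * w ^ Suc a"] show ?thesis
    unfolding jump_gf_def by (simp add: power_add power_mult_distrib algebra_simps diff_divide_distrib)
qed

lemma free_jump_monomial_has_sum_last:
  fixes w :: "nat \<Rightarrow> 'a::{real_normed_field,banach}"
  assumes last: "Suc m = length x" and w: "norm (of_real b * w m) < 1"
  shows "((\<lambda>y. of_real (free_jump b m x y) * monomial w y) has_sum (jump_gf b (w m) * monomial w x)) UNIV"
proof -
  have m: "m < length x"
    using last by simp
  define h where "h j = x[m := x ! m + Suc j]" for j
  have "inj h"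
    unfolding h_def inj_on_def by (metis m add_left_cancel nth_list_update_eq old.nat.inject)
  moreover have "free_jump b m x y = 0" if "y \<notin> range h" for y
  proof (rule ccontr)
    assume "free_jump b m x y \<noteq> 0"
    then have "x ! m < y ! m" "y = x[m := y ! m]"
      unfolding free_jump_def by (auto split: if_splits)
    then have "y = h (y ! m - x ! m - 1)"
      unfolding h_def by simp
    with that show False
      by blast
  qed
  moreover have "of_real (free_jump b m x (h j)) * monomial w (h j)
      = monomial_except w x m * (of_real ((1 - b) * b ^ j) * w m ^ (Suc (x ! m) + j))" for j
    using m last by (simp add: h_def free_jump_def monomial_update)
  ultimately show ?thesis
    using has_sum_cmult_right[OF has_sum_jump_gf[OF w], of "monomial_except w x m" "x ! m"]
    by (intro has_sum_UNIV_from_image[of h UNIV]) (auto simp: monomial_split[OF m] mult_ac)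
qed

lemma free_jump_monomial_has_sum_inner:
  fixes w :: "nat \<Rightarrow> 'a::real_normed_field"
  assumes inner: "Suc m < length x" and gap: "x ! m < x ! Suc m" and w: "1 - of_real b * w m \<noteq> 0"
  shows "((\<lambda>y. of_real (free_jump b m x y) * monomial w y) has_sum
    (jump_gf b (w m) * monomial w x - of_real (b ^ (x ! Suc m - x ! m - 1))
      * (of_real (1 - b) / (1 - of_real b * w m)) * monomial w (x[m := x ! Suc m]))) UNIV"
proof -
  have m: "m < length x"
    using inner by simp
  define S where "S = {x ! m<..<x ! Suc m}"
  define h where "h v = x[m := v]" for v
  have "inj_on h S"
    unfolding h_def inj_on_def by (metis m nth_list_update_eq)
  moreover have "free_jump b m x y = 0" if "y \<notin> h ` S" for y
  proof (rule ccontr)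
    assume "free_jump b m x y \<noteq> 0"
    then have "y ! m \<in> S" "y = h (y ! m)"
      using inner unfolding free_jump_def S_def h_def by (auto split: if_splits)
    with that show False
      by blast
  qed
  moreover have "of_real (free_jump b m x (h v)) * monomial w (h v)
      = monomial_except w x m * of_real (1 - b) * (of_real (b ^ (v - x ! m - 1)) * w m ^ v)"
    if "v \<in> S" for v
    using that m inner by (simp add: S_def h_def free_jump_def monomial_update mult_ac)
  moreover have "(\<Sum>v\<in>S. monomial_except w x m * of_real (1 - b) * (of_real (b ^ (v - x ! m - 1)) * w m ^ v))
      = jump_gf b (w m) * monomial w x - of_real (b ^ (x ! Suc m - x ! m - 1))
        * (of_real (1 - b) / (1 - of_real b * w m)) * monomial w (x[m := x ! Suc m])"
  proof -
    have geo: "(\<Sum>v\<in>S. of_real (b ^ (v - x ! m - 1)) * w m ^ v)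
        = (w m ^ Suc (x ! m) - of_real (b ^ (x ! Suc m - x ! m - 1)) * w m ^ (x ! Suc m))
          / (1 - of_real b * w m)"
      using sum_geometric_between[OF gap, of b "w m"] w unfolding S_def by (simp add: eq_divide_eq)
    have "(\<Sum>v\<in>S. monomial_except w x m * of_real (1 - b) * (of_real (b ^ (v - x ! m - 1)) * w m ^ v))
        = monomial_except w x m * of_real (1 - b) * (\<Sum>v\<in>S. of_real (b ^ (v - x ! m - 1)) * w m ^ v)"
      by (simp add: sum_distrib_left)
    also have "\<dots> = jump_gf b (w m) * monomial w x - of_real (b ^ (x ! Suc m - x ! m - 1))
        * (of_real (1 - b) / (1 - of_real b * w m)) * monomial w (x[m := x ! Suc m])"
      unfolding geo monomial_split[OF m] monomial_update[OF m] jump_gf_def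
      by (simp add: divide_inverse algebra_simps)
    finally show ?thesis .
  qed
  ultimately show ?thesis
    by (intro has_sum_UNIV_from_image[of h S]) (auto intro: has_sum_finiteI simp: S_def)
qed

lemma push_move_monomial_has_sum:
  fixes w :: "nat \<Rightarrow> 'a::{real_normed_field,banach}"
  assumes "\<forall>i<length x. norm (of_real b * w i) < 1" "m < length x" "increasing_from m x"
  shows "((\<lambda>y. of_real (push_move b m x y) * monomial w y) has_sum
    (jump_gf b (w m) * monomial w x + cascade_defect b w m x)) UNIV"
  using assms
proof (induction "length x - m" arbitrary: m x rule: less_induct)
  case less
  have w: "norm (of_real b * w m) < 1"
    using less.prems(1,2) by blast
  show ?case
  proof (cases "Suc m < length x")
    case False
    then have "push_move b m x y = free_jump b m x y" for y
      using push_move_split[OF less.prems(2)] push_move_nonzeroD[of b "Suc m"] by fastforce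
    moreover have "Suc m = length x"
      using less.prems(2) False by simp
    ultimately show ?thesis
      using free_jump_monomial_has_sum_last[of m x b w] w by (simp add: cascade_defect_last)
  next
    case True
    define x' where "x' = x[m := x ! Suc m]"
    define c where "c = (of_real (b ^ (x ! Suc m - x ! m - 1)) :: 'a)"
    have gap: "x ! m < x ! Suc m"
      using less.prems(3) True unfolding increasing_from_def by blast
    have "1 - of_real b * w m \<noteq> 0"
      using w by (rule one_minus_nonzero)
    note free = free_jump_monomial_has_sum_inner[of m x b w, OF True gap this]
    have "increasing_from (Suc m) x'"
      using less.prems(3) unfolding increasing_from_def x'_def by auto
    with less.hyps[of x' "Suc m"] less.prems(1) True
    have pushed: "((\<lambda>y. of_real (push_move b (Suc m) x' y) * monomial w y) has_sum
        (jump_gf b (w (Suc m)) * monomial w x' + cascade_defect b w (Suc m) x')) UNIV"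
      unfolding x'_def by simp
    have "((\<lambda>y. of_real (free_jump b m x y) * monomial w y
        + c * (of_real (push_move b (Suc m) x' y) * monomial w y)) has_sum
        (jump_gf b (w m) * monomial w x + cascade_defect b w m x)) UNIV"
      using has_sum_add[OF free has_sum_cmult_right[OF pushed, of c]] True
      by (simp add: cascade_defect.simps[of b w m x] push_defect_def c_def x'_def algebra_simps)
    then show ?thesis
      by (simp add: push_move_split[OF less.prems(2)] c_def x'_def algebra_simps)
  qed
qed

section \<open>Antisymmetrisation\<close>

lemma prod_pairs_transpose_adjacent:
  fixes F :: "nat \<Rightarrow> nat \<Rightarrow> 'a::comm_monoid_mult"
  assumes "Suc k < N"
  defines "\<tau> \<equiv> Transposition.transpose k (Suc k)"
  shows "(\<Prod>(i, j)\<in>{(i, j). i < j \<and> j < N}. F (\<tau> i) (\<tau> j)) * F k (Suc k)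
       = (\<Prod>(i, j)\<in>{(i, j). i < j \<and> j < N}. F i j) * F (Suc k) k"
proof -
  define P where "P = {(i, j). i < j \<and> j < N} - {(k, Suc k)}"
  have "finite P"
    unfolding P_def by (rule finite_subset[of _ "{..<N} \<times> {..<N}"]) auto
  have pairs: "{(i, j). i < j \<and> j < N} = insert (k, Suc k) P" and "(k, Suc k) \<notin> P"
    unfolding P_def using assms by auto
  have "(i, j) \<in> P \<Longrightarrow> (\<tau> i, \<tau> j) \<in> P" for i j
    using assms unfolding P_def Transposition.transpose_def by (auto split: if_splits)
  then have "(\<Prod>(i, j)\<in>P. F (\<tau> i) (\<tau> j)) = (\<Prod>(i, j)\<in>P. F i j)"
    by (intro prod.reindex_bij_witness[where i="\<lambda>(i, j). (\<tau> i, \<tau> j)" and j="\<lambda>(i, j). (\<tau> i, \<tau> j)"])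
      (auto simp: \<tau>_def)
  moreover have "\<tau> k = Suc k" "\<tau> (Suc k) = k"
    by (simp_all add: \<tau>_def)
  ultimately show ?thesis
    unfolding pairs using \<open>finite P\<close> \<open>(k, Suc k) \<notin> P\<close> by (simp add: mult_ac)
qed

lemma A_coef_transpose_adjacent:
  assumes "\<sigma> permutes {..<N}" "Suc k < N"
  shows "A_coef b N z (\<sigma> \<circ> Transposition.transpose k (Suc k)) * Afac b (z (\<sigma> k)) (z (\<sigma> (Suc k)))
       = - (A_coef b N z \<sigma> * Afac b (z (\<sigma> (Suc k))) (z (\<sigma> k)))"
proof -
  define \<tau> where "\<tau> = Transposition.transpose k (Suc k)"
  have "\<tau> permutes {..<N}"
    unfolding \<tau>_def using assms(2) by (intro permutes_swap_id) auto
  then have sign: "sign (\<sigma> \<circ> \<tau>) = - sign \<sigma>"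
    using sign_compose[OF permutes_imp_permutation[OF _ assms(1)] permutes_imp_permutation[of "{..<N}" \<tau>]]
    by (simp add: \<tau>_def sign_swap_id)
  have A_coef: "A_coef b N z p = of_int (sign p) *
      ((\<Prod>(i, j)\<in>{(i, j). i < j \<and> j < N}. Afac b (z (p i)) (z (p j))) /
       (\<Prod>(i, j)\<in>{(i, j). i < j \<and> j < N}. Afac b (z i) (z j)))" for p
    unfolding A_coef_def by (subst prod_dividef[symmetric]) (simp add: case_prod_unfold)
  show ?thesis
    using prod_pairs_transpose_adjacent[OF assms(2), of "\<lambda>i j. Afac b (z (\<sigma> i)) (z (\<sigma> j))"]
    unfolding A_coef \<tau>_def[symmetric] sign by (simp add: divide_inverse mult_ac)
qed

text \<open>The push defect is, up to a factor symmetric in \<open>u, v\<close>, the factor \<open>Afac b v u\<close>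
  that \<open>A_coef\<close> trades for \<open>Afac b u v\<close> under an adjacent transposition.\<close>
lemma push_defect_eq_Afac:
  fixes u v :: complex
  assumes "1 - of_real b * u \<noteq> 0" "1 - of_real b * v \<noteq> 0"
  shows "push_defect b u v = - (of_real (1 - b) / ((1 - of_real b * u) * (1 - of_real b * v))) * Afac b v u"
  using assms unfolding push_defect_def jump_gf_def Afac_def
  by (simp add: divide_simps) (simp add: algebra_simps)

lemma Phi_eq_sum_monomial:
  "length y = N \<Longrightarrow> Phi b N y z = (\<Sum>\<sigma> | \<sigma> permutes {..<N}. A_coef b N z \<sigma> * monomial (z \<circ> \<sigma>) y)"
  unfolding Phi_def monomial_def by simp

text \<open>Composing with the adjacent transposition at \<open>k\<close> flips the sign of each summand, because
  the monomial does not see the transposition when \<open>y ! k = y ! Suc k\<close>.\<close>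
lemma sum_A_coef_push_defect_eq_0:
  fixes z :: "nat \<Rightarrow> complex"
  assumes k: "Suc k < N" and y: "length y = N" "y ! k = y ! Suc k"
    and nz: "\<forall>i<N. 1 - of_real b * z i \<noteq> 0"
  shows "(\<Sum>\<sigma> | \<sigma> permutes {..<N}.
    A_coef b N z \<sigma> * (push_defect b (z (\<sigma> k)) (z (\<sigma> (Suc k))) * monomial (z \<circ> \<sigma>) y)) = 0"
proof -
  define \<tau> where "\<tau> = Transposition.transpose k (Suc k)"
  have \<tau>: "\<tau> permutes {..<N}"
    unfolding \<tau>_def using k by (intro permutes_swap_id) auto
  define h where "h \<sigma> = A_coef b N z \<sigma> * (push_defect b (z (\<sigma> k)) (z (\<sigma> (Suc k))) * monomial (z \<circ> \<sigma>) y)"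
    for \<sigma>
  have "h (\<sigma> \<circ> \<tau>) = - h \<sigma>" if \<sigma>: "\<sigma> permutes {..<N}" for \<sigma>
  proof -
    have "\<sigma> k < N" "\<sigma> (Suc k) < N"
      using permutes_in_image[OF \<sigma>] k by auto
    define c where "c = - (of_real (1 - b) / ((1 - of_real b * z (\<sigma> k)) * (1 - of_real b * z (\<sigma> (Suc k)))))"
    have defect: "push_defect b (z (\<sigma> k)) (z (\<sigma> (Suc k))) = c * Afac b (z (\<sigma> (Suc k))) (z (\<sigma> k))"
      "push_defect b (z (\<sigma> (Suc k))) (z (\<sigma> k)) = c * Afac b (z (\<sigma> k)) (z (\<sigma> (Suc k)))"
      unfolding c_def using push_defect_eq_Afac nz \<open>\<sigma> k < N\<close> \<open>\<sigma> (Suc k) < N\<close> by (simp_all add: mult_ac)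
    have "y ! (\<tau> i) = y ! i" for i
      using y(2) unfolding \<tau>_def Transposition.transpose_def by auto
    then have "monomial (z \<circ> (\<sigma> \<circ> \<tau>)) y = (\<Prod>i<N. ((\<lambda>i. z (\<sigma> i) ^ (y ! i)) \<circ> \<tau>) i)"
      unfolding monomial_def y(1) by simp
    also have "\<dots> = monomial (z \<circ> \<sigma>) y"
      unfolding monomial_def y(1) using prod.permute[OF \<tau>, symmetric] by (simp add: o_def)
    finally have "h (\<sigma> \<circ> \<tau>) = c * monomial (z \<circ> \<sigma>) y *
        (A_coef b N z (\<sigma> \<circ> \<tau>) * Afac b (z (\<sigma> k)) (z (\<sigma> (Suc k))))"
      unfolding h_def by (simp add: defect \<tau>_def mult_ac)
    then show ?thesis
      unfolding \<tau>_def A_coef_transpose_adjacent[OF \<sigma> k] h_def defect by (simp add: mult_ac)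
  qed
  then have "sum h {\<sigma>. \<sigma> permutes {..<N}} = - sum h {\<sigma>. \<sigma> permutes {..<N}}"
    using sum_permutations_compose_right[OF \<tau>, of h] by (simp add: sum_negf)
  then show ?thesis
    unfolding h_def by simp
qed

lemma sum_A_coef_cascade_defect_eq_0:
  fixes z :: "nat \<Rightarrow> complex"
  assumes "\<forall>i<N. 1 - of_real b * z i \<noteq> 0"
  shows "length x = N \<Longrightarrow> (\<Sum>\<sigma> | \<sigma> permutes {..<N}. A_coef b N z \<sigma> * cascade_defect b (z \<circ> \<sigma>) m x) = 0"
proof (induction "length x - m" arbitrary: m x rule: less_induct)
  case less
  show ?case
  proof (cases "Suc m < length x")
    case False
    then show ?thesis
      by (simp add: cascade_defect_last)
  next
    case True
    define x' where "x' = x[m := x ! Suc m]"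
    have "(\<Sum>\<sigma> | \<sigma> permutes {..<N}. A_coef b N z \<sigma> * cascade_defect b (z \<circ> \<sigma>) m x)
      = of_real (b ^ (x ! Suc m - x ! m - 1)) *
        ((\<Sum>\<sigma> | \<sigma> permutes {..<N}.
            A_coef b N z \<sigma> * (push_defect b (z (\<sigma> m)) (z (\<sigma> (Suc m))) * monomial (z \<circ> \<sigma>) x'))
         + (\<Sum>\<sigma> | \<sigma> permutes {..<N}. A_coef b N z \<sigma> * cascade_defect b (z \<circ> \<sigma>) (Suc m) x'))"
      using True unfolding x'_def
      by (simp add: cascade_defect.simps[of _ _ m x] sum_distrib_left sum.distrib algebra_simps)
    moreover have "(\<Sum>\<sigma> | \<sigma> permutes {..<N}.
        A_coef b N z \<sigma> * (push_defect b (z (\<sigma> m)) (z (\<sigma> (Suc m))) * monomial (z \<circ> \<sigma>) x')) = 0"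
      using True less.prems assms unfolding x'_def by (intro sum_A_coef_push_defect_eq_0) auto
    moreover have "(\<Sum>\<sigma> | \<sigma> permutes {..<N}. A_coef b N z \<sigma> * cascade_defect b (z \<circ> \<sigma>) (Suc m) x') = 0"
      using less.hyps[of x' "Suc m"] True less.prems unfolding x'_def by simp
    ultimately show ?thesis
      by simp
  qed
qed

lemma push_move_Phi_has_sum:
  fixes z :: "nat \<Rightarrow> complex"
  assumes z: "\<forall>i<N. cmod (of_real b * z i) < 1" and x: "x \<in> XN N" and m: "m < N"
  shows "((\<lambda>y. of_real (push_move b m x y) * Phi b N y z) has_sum
    (\<Sum>\<sigma> | \<sigma> permutes {..<N}.
      A_coef b N z \<sigma> * (jump_gf b (z (\<sigma> m)) * monomial (z \<circ> \<sigma>) x + cascade_defect b (z \<circ> \<sigma>) m x))) UNIV"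
proof -
  have len: "length x = N" and inc: "increasing_from m x"
    using x by (simp_all add: XN_iff increasing_from_def)
  have "((\<lambda>y. A_coef b N z \<sigma> * (of_real (push_move b m x y) * monomial (z \<circ> \<sigma>) y)) has_sum
      A_coef b N z \<sigma> * (jump_gf b (z (\<sigma> m)) * monomial (z \<circ> \<sigma>) x + cascade_defect b (z \<circ> \<sigma>) m x)) UNIV"
    if \<sigma>: "\<sigma> permutes {..<N}" for \<sigma>
  proof -
    have "\<forall>i<length x. norm (of_real b * (z \<circ> \<sigma>) i) < 1"
      using z len permutes_in_image[OF \<sigma>] by auto
    with m len inc have "((\<lambda>y. of_real (push_move b m x y) * monomial (z \<circ> \<sigma>) y) has_sum
        (jump_gf b ((z \<circ> \<sigma>) m) * monomial (z \<circ> \<sigma>) x + cascade_defect b (z \<circ> \<sigma>) m x)) UNIV"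
      by (intro push_move_monomial_has_sum) simp_all
    from has_sum_cmult_right[OF this] show ?thesis
      by simp
  qed
  then have "((\<lambda>y. \<Sum>\<sigma> | \<sigma> permutes {..<N}. A_coef b N z \<sigma> * (of_real (push_move b m x y) * monomial (z \<circ> \<sigma>) y))
      has_sum (\<Sum>\<sigma> | \<sigma> permutes {..<N}.
        A_coef b N z \<sigma> * (jump_gf b (z (\<sigma> m)) * monomial (z \<circ> \<sigma>) x + cascade_defect b (z \<circ> \<sigma>) m x))) UNIV"
    by (intro has_sum_sum) (simp_all add: finite_permutations)
  moreover have "of_real (push_move b m x y) * Phi b N y z
      = (\<Sum>\<sigma> | \<sigma> permutes {..<N}. A_coef b N z \<sigma> * (of_real (push_move b m x y) * monomial (z \<circ> \<sigma>) y))" for y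
  proof (cases "length y = N")
    case False
    then have "push_move b m x y = 0"
      using push_move_nonzeroD[of b m x y] len by auto
    then show ?thesis
      by simp
  qed (simp add: Phi_eq_sum_monomial sum_distrib_left mult_ac)
  ultimately show ?thesis
    by simp
qed

lemma jump_kernel_Phi_has_sum:
  fixes z :: "nat \<Rightarrow> complex"
  assumes z: "\<forall>i<N. cmod (of_real b * z i) < 1" and x: "x \<in> XN N"
  shows "((\<lambda>y. of_real (jump_kernel b N x y) * Phi b N y z) has_sum
    ((\<Sum>m<N. jump_gf b (z m)) / of_nat N * Phi b N x z)) (XN N)"
proof -
  define P where "P = {\<sigma>. \<sigma> permutes {..<N}}"
  have len: "length x = N"
    using x by (simp add: XN_iff)
  have "1 - of_real b * z i \<noteq> 0" if "i < N" for i
    by (rule one_minus_nonzero) (use z that in simp)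
  then have no_defect: "(\<Sum>m<N. \<Sum>\<sigma>\<in>P. A_coef b N z \<sigma> * cascade_defect b (z \<circ> \<sigma>) m x) = 0"
    using sum_A_coef_cascade_defect_eq_0[OF _ len] unfolding P_def by simp
  have perm: "(\<Sum>m<N. jump_gf b (z (\<sigma> m))) = (\<Sum>m<N. jump_gf b (z m))" if "\<sigma> \<in> P" for \<sigma>
    using sum.permute[of \<sigma> "{..<N}" "\<lambda>m. jump_gf b (z m)"] that unfolding P_def by (simp add: o_def)
  have "(\<Sum>m<N. \<Sum>\<sigma>\<in>P. A_coef b N z \<sigma> * (jump_gf b (z (\<sigma> m)) * monomial (z \<circ> \<sigma>) x))
      = (\<Sum>\<sigma>\<in>P. A_coef b N z \<sigma> * monomial (z \<circ> \<sigma>) x * (\<Sum>m<N. jump_gf b (z (\<sigma> m))))"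
    by (subst sum.swap) (simp add: sum_distrib_left mult_ac)
  also have "\<dots> = (\<Sum>m<N. jump_gf b (z m)) * Phi b N x z"
    by (simp add: perm Phi_eq_sum_monomial[OF len] P_def sum_distrib_left mult_ac)
  finally have "(\<Sum>m<N. \<Sum>\<sigma>\<in>P. A_coef b N z \<sigma> *
      (jump_gf b (z (\<sigma> m)) * monomial (z \<circ> \<sigma>) x + cascade_defect b (z \<circ> \<sigma>) m x))
      = (\<Sum>m<N. jump_gf b (z m)) * Phi b N x z"
    using no_defect by (simp add: distrib_left sum.distrib)
  with jump_kernel_has_sum[OF x push_move_Phi_has_sum[OF z x]] show ?thesis
    unfolding P_def by simp
qed

section \<open>Domination by a geometric weight\<close>

lemma push_defect_const_nonneg:
  assumes "0 \<le> b" "b * R < 1" "1 \<le> R"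
  shows "0 \<le> push_defect b R (R::real)"
proof -
  have "b < 1"
    using assms by (smt (verit) mult_left_mono mult_cancel_left1)
  moreover have "push_defect b R R = (1 - b) * (R - 1) / (1 - b * R)"
    unfolding push_defect_def jump_gf_def by (simp add: diff_divide_distrib[symmetric] algebra_simps)
  ultimately show ?thesis
    using assms by simp
qed

lemma monomial_const_ge_1: "1 \<le> (R::real) \<Longrightarrow> 1 \<le> monomial (\<lambda>_. R) x"
  unfolding monomial_def by (intro prod_ge_1) auto

lemma one_le_push_growth:
  assumes "0 \<le> b" "b * R < 1" "1 \<le> R"
  shows "1 \<le> R * (1 + push_defect b R R)"
  using push_defect_const_nonneg[OF assms] assms(3)
  by (metis le_add_same_cancel1 mult_mono' mult_1 zero_le_one order_trans)

text \<open>A push moves particle \<open>m\<close> by \<open>g + 1\<close> sites at the price \<open>b\<^sup>g\<close>, and \<open>b R < 1\<close>.\<close>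
lemma push_weight_le:
  fixes R :: real
  assumes b: "0 \<le> b" "b * R < 1" and R: "1 \<le> R" and m: "Suc m < length x" "x ! m < x ! Suc m"
  shows "b ^ (x ! Suc m - x ! m - 1) * monomial (\<lambda>_. R) (x[m := x ! Suc m]) \<le> R * monomial (\<lambda>_. R) x"
proof -
  define g where "g = x ! Suc m - x ! m - 1"
  have "x ! Suc m = x ! m + g + 1"
    unfolding g_def using m(2) by simp
  then have "b ^ g * R ^ (x ! Suc m) = R * R ^ (x ! m) * (b * R) ^ g"
    by (simp add: power_add power_mult_distrib mult_ac)
  also have "\<dots> \<le> R * R ^ (x ! m)"
    using b R by (intro mult_left_le power_le_one) auto
  finally have "b ^ g * R ^ (x ! Suc m) * monomial_except (\<lambda>_. R) x m
      \<le> R * R ^ (x ! m) * monomial_except (\<lambda>_. R) x m"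
    using R by (intro mult_right_mono) (auto simp: monomial_except_def prod_nonneg)
  then show ?thesis
    unfolding g_def[symmetric] monomial_update[OF Suc_lessD[OF m(1)]] monomial_split[OF Suc_lessD[OF m(1)]]
    by (simp add: mult_ac)
qed

lemma cascade_defect_const_le:
  fixes R :: real
  assumes b: "0 \<le> b" "b * R < 1" and R: "1 \<le> R"
  shows "increasing_from m x \<Longrightarrow>
    cascade_defect b (\<lambda>_. R) m x \<le> (R * (1 + push_defect b R R)) ^ (length x - m) * monomial (\<lambda>_. R) x"
proof (induction "length x - m" arbitrary: m x rule: less_induct)
  case less
  define D where "D = push_defect b R R"
  define B where "B = R * (1 + D)"
  have "0 \<le> D" "1 \<le> B"
    unfolding B_def D_def using push_defect_const_nonneg[OF assms] one_le_push_growth[OF assms] by auto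
  show ?case
  proof (cases "Suc m < length x")
    case False
    then show ?thesis
      using monomial_const_ge_1[OF R, of x] \<open>1 \<le> B\<close> by (simp add: cascade_defect_last B_def D_def)
  next
    case True
    define x' where "x' = x[m := x ! Suc m]"
    define g where "g = x ! Suc m - x ! m - 1"
    define k where "k = length x - Suc m"
    have "x ! m < x ! Suc m"
      using less.prems True unfolding increasing_from_def by blast
    with True have push: "b ^ g * monomial (\<lambda>_. R) x' \<le> R * monomial (\<lambda>_. R) x"
      unfolding g_def x'_def by (rule push_weight_le[OF b R])
    have "increasing_from (Suc m) x'"
      using less.prems unfolding increasing_from_def x'_def by auto
    with less.hyps[of x' "Suc m"] True
    have IH: "cascade_defect b (\<lambda>_. R) (Suc m) x' \<le> B ^ k * monomial (\<lambda>_. R) x'"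
      unfolding x'_def k_def B_def D_def by simp
    have "cascade_defect b (\<lambda>_. R) m x = b ^ g * (D * monomial (\<lambda>_. R) x' + cascade_defect b (\<lambda>_. R) (Suc m) x')"
      using True unfolding x'_def g_def D_def by (simp add: cascade_defect.simps[of _ _ m x])
    also have "\<dots> \<le> (D + B ^ k) * (b ^ g * monomial (\<lambda>_. R) x')"
      using mult_left_mono[OF IH, of "b ^ g"] b by (simp add: algebra_simps)
    also have "\<dots> \<le> (D + B ^ k) * (R * monomial (\<lambda>_. R) x)"
      using push \<open>0 \<le> D\<close> \<open>1 \<le> B\<close> by (intro mult_left_mono) auto
    also have "\<dots> \<le> B ^ Suc k * monomial (\<lambda>_. R) x"
    proof -
      have "D + B ^ k \<le> (1 + D) * B ^ k"
        using \<open>0 \<le> D\<close> \<open>1 \<le> B\<close> by (simp add: algebra_simps mult_le_cancel_left1)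
      then show ?thesis
        using R monomial_const_ge_1[OF R, of x] unfolding B_def
        by (simp add: mult_right_mono mult_left_mono mult_ac)
    qed
    finally show ?thesis
      using True unfolding k_def B_def D_def by (simp add: Suc_diff_Suc)
  qed
qed

definition weight_growth :: "real \<Rightarrow> nat \<Rightarrow> real \<Rightarrow> real" where
  "weight_growth b N R = jump_gf b R + (R * (1 + push_defect b R R)) ^ N"

definition weight_drift :: "real \<Rightarrow> nat \<Rightarrow> real \<Rightarrow> nat list \<Rightarrow> real" where
  "weight_drift b N R x = (\<Sum>\<^sub>\<infinity>y\<in>XN N. jump_kernel b N x y * monomial (\<lambda>_. R) y)"

lemma norm_Phi_le:
  fixes z :: "nat \<Rightarrow> complex"
  assumes zR: "\<forall>i<N. cmod (z i) \<le> R" and y: "length y = N"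
  shows "cmod (Phi b N y z) \<le> (\<Sum>\<sigma> | \<sigma> permutes {..<N}. cmod (A_coef b N z \<sigma>)) * monomial (\<lambda>_. R) y"
proof -
  have "cmod (monomial (z \<circ> \<sigma>) y) \<le> monomial (\<lambda>_. R) y" if \<sigma>: "\<sigma> permutes {..<N}" for \<sigma>
    unfolding monomial_def prod_norm[symmetric] norm_power
  proof (intro prod_mono conjI)
    fix i assume "i \<in> {..<length y}"
    then have "\<sigma> i < N"
      using permutes_in_image[OF \<sigma>] y by auto
    then show "cmod ((z \<circ> \<sigma>) i) ^ (y ! i) \<le> R ^ (y ! i)"
      using zR by (intro power_mono) auto
  qed simp
  then have "cmod (A_coef b N z \<sigma> * monomial (z \<circ> \<sigma>) y) \<le> cmod (A_coef b N z \<sigma>) * monomial (\<lambda>_. R) y"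
    if "\<sigma> permutes {..<N}" for \<sigma>
    using that unfolding norm_mult by (intro mult_left_mono) auto
  then have "cmod (Phi b N y z) \<le> (\<Sum>\<sigma> | \<sigma> permutes {..<N}. cmod (A_coef b N z \<sigma>) * monomial (\<lambda>_. R) y)"
    unfolding Phi_eq_sum_monomial[OF y] by (intro order_trans[OF norm_sum sum_mono]) auto
  then show ?thesis
    by (simp add: sum_distrib_right)
qed

lemma norm_scaled_Phi_le:
  fixes z :: "nat \<Rightarrow> complex"
  assumes "\<forall>i<N. cmod (z i) \<le> R" "y \<in> XN N" "0 \<le> k"
  shows "norm (of_real k * Phi b N y z)
    \<le> (\<Sum>\<sigma> | \<sigma> permutes {..<N}. cmod (A_coef b N z \<sigma>)) * (k * monomial (\<lambda>_. R) y)"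
  using mult_left_mono[OF norm_Phi_le[OF assms(1)] assms(3)] assms(2,3)
  by (simp add: norm_mult XN_iff mult_ac)

context
  fixes b :: real and N :: nat and R :: real
  assumes b: "0 \<le> b" "b < 1" and R: "1 \<le> R" "b * R < 1" and N: "0 < N"
begin

lemma weight_pos: "0 < monomial (\<lambda>_. R) y"
  using monomial_const_ge_1[OF R(1), of y] by linarith

lemma jump_kernel_weight_has_sum:
  assumes x: "x \<in> XN N"
  shows "((\<lambda>y. jump_kernel b N x y * monomial (\<lambda>_. R) y) has_sum weight_drift b N R x) (XN N)"
    and "weight_drift b N R x \<le> weight_growth b N R * monomial (\<lambda>_. R) x"
proof -
  have len: "length x = N" and inc: "increasing_from 0 x"
    using x by (simp_all add: XN_iff)
  have "\<forall>i<length x. norm (of_real b * R) < 1"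
    using b R by simp
  then have "((\<lambda>y. of_real (push_move b m x y) * monomial (\<lambda>_. R) y) has_sum
      (jump_gf b R * monomial (\<lambda>_. R) x + cascade_defect b (\<lambda>_. R) m x)) UNIV" if "m < N" for m
    using push_move_monomial_has_sum[of x b "\<lambda>_. R" m] that len inc
    by (simp add: increasing_from_def)
  from jump_kernel_has_sum[OF x this]
  have sum: "((\<lambda>y. jump_kernel b N x y * monomial (\<lambda>_. R) y) has_sum
      (\<Sum>m<N. jump_gf b R * monomial (\<lambda>_. R) x + cascade_defect b (\<lambda>_. R) m x) / real N) (XN N)"
    by simp
  then show "((\<lambda>y. jump_kernel b N x y * monomial (\<lambda>_. R) y) has_sum weight_drift b N R x) (XN N)"
    unfolding weight_drift_def by (simp add: has_sum_iff)
  define B where "B = R * (1 + push_defect b R R)"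
  have "1 \<le> B"
    unfolding B_def using one_le_push_growth[OF b(1) R(2,1)] .
  have "cascade_defect b (\<lambda>_. R) m x \<le> B ^ N * monomial (\<lambda>_. R) x" if "m < N" for m
  proof -
    have "cascade_defect b (\<lambda>_. R) m x \<le> B ^ (length x - m) * monomial (\<lambda>_. R) x"
      using cascade_defect_const_le[OF b(1) R(2,1)] inc unfolding B_def increasing_from_def by blast
    also have "\<dots> \<le> B ^ N * monomial (\<lambda>_. R) x"
      using \<open>1 \<le> B\<close> len monomial_const_ge_1[OF R(1), of x] by (intro mult_right_mono power_increasing) auto
    finally show ?thesis .
  qed
  then have "(\<Sum>m<N. jump_gf b R * monomial (\<lambda>_. R) x + cascade_defect b (\<lambda>_. R) m x)
      \<le> real N * (weight_growth b N R * monomial (\<lambda>_. R) x)"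
    using sum_mono[of "{..<N}" "\<lambda>m. jump_gf b R * monomial (\<lambda>_. R) x + cascade_defect b (\<lambda>_. R) m x"
        "\<lambda>_. weight_growth b N R * monomial (\<lambda>_. R) x"]
    unfolding weight_growth_def B_def by (simp add: algebra_simps)
  with sum N show "weight_drift b N R x \<le> weight_growth b N R * monomial (\<lambda>_. R) x"
    unfolding weight_drift_def by (simp add: infsumI divide_le_eq mult_ac)
qed

lemma weight_growth_nonneg: "0 \<le> weight_growth b N R"
proof -
  have "0 \<le> jump_gf b R"
    unfolding jump_gf_def using b R by simp
  moreover have "0 \<le> R * (1 + push_defect b R R)"
    using push_defect_const_nonneg[OF b(1) R(2,1)] R(1) by simp
  ultimately show ?thesis
    unfolding weight_growth_def by simp
qed

lemma weight_drift_nonneg: "x \<in> XN N \<Longrightarrow> 0 \<le> weight_drift b N R x"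
proof (erule has_sum_nonneg[OF jump_kernel_weight_has_sum(1)])
  fix y
  show "0 \<le> jump_kernel b N x y * monomial (\<lambda>_. R) y"
    using jump_kernel_nonneg[of b N x y] weight_pos[of y] b by simp
qed

lemma jump_kernel_pow_drift_le:
  assumes "ws \<in> XN N"
  shows "jump_kernel_pow b N n x ws * weight_drift b N R ws
    \<le> weight_growth b N R * (jump_kernel_pow b N n x ws * monomial (\<lambda>_. R) ws)"
  using mult_left_mono[OF jump_kernel_weight_has_sum(2)[OF assms] jump_kernel_pow_nonneg[of b]] b
  by (simp add: mult.left_commute)

lemma jump_kernel_pow_drift_summable:
  assumes "(\<lambda>ws. jump_kernel_pow b N n x ws * monomial (\<lambda>_. R) ws) summable_on XN N"
  shows "(\<lambda>ws. jump_kernel_pow b N n x ws * weight_drift b N R ws) summable_on XN N"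
proof (rule summable_on_comparison_test)
  show "(\<lambda>ws. weight_growth b N R * (jump_kernel_pow b N n x ws * monomial (\<lambda>_. R) ws)) summable_on XN N"
    using assms by (rule summable_on_cmult_right)
  fix ws assume ws: "ws \<in> XN N"
  show "0 \<le> jump_kernel_pow b N n x ws * weight_drift b N R ws"
    using weight_drift_nonneg[OF ws] jump_kernel_pow_nonneg[of b] b by simp
  show "jump_kernel_pow b N n x ws * weight_drift b N R ws
      \<le> weight_growth b N R * (jump_kernel_pow b N n x ws * monomial (\<lambda>_. R) ws)"
    using ws by (rule jump_kernel_pow_drift_le)
qed

lemma jump_chain_Sigma_summable:
  assumes "(\<lambda>ws. jump_kernel_pow b N n x ws * monomial (\<lambda>_. R) ws) summable_on XN N"
  shows "(\<lambda>(ws, y). jump_kernel_pow b N n x ws * (jump_kernel b N ws y * monomial (\<lambda>_. R) y))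
    summable_on XN N \<times> XN N"
proof (rule summable_on_SigmaI[where g="\<lambda>ws. jump_kernel_pow b N n x ws * weight_drift b N R ws"])
  fix ws assume ws: "ws \<in> XN N"
  show "((\<lambda>y. case (ws, y) of (ws, y) \<Rightarrow>
      jump_kernel_pow b N n x ws * (jump_kernel b N ws y * monomial (\<lambda>_. R) y)) has_sum
      jump_kernel_pow b N n x ws * weight_drift b N R ws) (XN N)"
    using has_sum_cmult_right[OF jump_kernel_weight_has_sum(1)[OF ws]] by simp
  fix y
  show "0 \<le> (case (ws, y) of (ws, y) \<Rightarrow>
      jump_kernel_pow b N n x ws * (jump_kernel b N ws y * monomial (\<lambda>_. R) y))"
    using jump_kernel_pow_nonneg[of b] jump_kernel_nonneg[of b] weight_pos[of y] b
    by (simp add: mult_nonneg_nonneg)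
qed (rule jump_kernel_pow_drift_summable[OF assms])

lemma jump_kernel_pow_Suc_has_sum:
  assumes "y \<in> XN N" "(\<lambda>ws. jump_kernel_pow b N n x ws * monomial (\<lambda>_. R) ws) summable_on XN N"
  shows "((\<lambda>ws. jump_kernel_pow b N n x ws * jump_kernel b N ws y) has_sum jump_kernel_pow b N (Suc n) x y) (XN N)"
proof -
  have "(\<lambda>(ws, y). (jump_kernel_pow b N n x ws * jump_kernel b N ws y) * monomial (\<lambda>_. R) y)
      summable_on XN N \<times> XN N"
    using jump_chain_Sigma_summable[OF assms(2)] by (simp add: mult.assoc)
  from summable_on_Sigma_column[OF this assms(1) weight_pos] show ?thesis
    by (simp add: has_sum_iff)
qed

lemma jump_kernel_pow_weight_le:
  assumes x: "x \<in> XN N"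
  shows "(\<lambda>y. jump_kernel_pow b N n x y * monomial (\<lambda>_. R) y) summable_on XN N
    \<and> (\<Sum>\<^sub>\<infinity>y\<in>XN N. jump_kernel_pow b N n x y * monomial (\<lambda>_. R) y) \<le> weight_growth b N R ^ n * monomial (\<lambda>_. R) x"
proof (induction n)
  case 0
  have "((\<lambda>y. jump_kernel_pow b N 0 x y * monomial (\<lambda>_. R) y) has_sum monomial (\<lambda>_. R) x) (XN N)"
    using x by (intro has_sum_finite_neutralI[of "{x}"]) auto
  then show ?case
    by (simp add: has_sum_iff)
next
  case (Suc n)
  then have sm: "(\<lambda>ws. jump_kernel_pow b N n x ws * monomial (\<lambda>_. R) ws) summable_on XN N"
    by blast
  define r where "r ws = jump_kernel_pow b N n x ws * weight_drift b N R ws" for ws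
  have total: "((\<lambda>y. jump_kernel_pow b N (Suc n) x y * monomial (\<lambda>_. R) y) has_sum
      (\<Sum>\<^sub>\<infinity>ws\<in>XN N. r ws)) (XN N)"
  proof (rule has_sum_swap_dominated[OF jump_chain_Sigma_summable[OF sm]])
    fix ws y assume "ws \<in> XN N" "y \<in> XN N"
    have "0 \<le> jump_kernel_pow b N n x ws * (jump_kernel b N ws y * monomial (\<lambda>_. R) y)"
      using jump_kernel_pow_nonneg[of b] jump_kernel_nonneg[of b] weight_pos[of y] b
      by (intro mult_nonneg_nonneg) auto
    then show "norm (jump_kernel_pow b N n x ws * (jump_kernel b N ws y * monomial (\<lambda>_. R) y))
      \<le> jump_kernel_pow b N n x ws * (jump_kernel b N ws y * monomial (\<lambda>_. R) y)"
      by simp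
  next
    show "(r has_sum (\<Sum>\<^sub>\<infinity>ws\<in>XN N. r ws)) (XN N)"
      using jump_kernel_pow_drift_summable[OF sm] unfolding r_def by simp
  next
    fix y assume "y \<in> XN N"
    from has_sum_cmult_left[OF jump_kernel_pow_Suc_has_sum[OF this sm]]
    show "((\<lambda>ws. jump_kernel_pow b N n x ws * (jump_kernel b N ws y * monomial (\<lambda>_. R) y)) has_sum
      jump_kernel_pow b N (Suc n) x y * monomial (\<lambda>_. R) y) (XN N)"
      by (simp add: mult.assoc)
  qed (use has_sum_cmult_right[OF jump_kernel_weight_has_sum(1)] in \<open>simp add: r_def\<close>)
  have "(\<Sum>\<^sub>\<infinity>ws\<in>XN N. r ws)
      \<le> (\<Sum>\<^sub>\<infinity>ws\<in>XN N. weight_growth b N R * (jump_kernel_pow b N n x ws * monomial (\<lambda>_. R) ws))"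
    using jump_kernel_pow_drift_summable[OF sm] summable_on_cmult_right[OF sm] jump_kernel_pow_drift_le
    unfolding r_def by (rule infsum_mono)
  also have "\<dots> \<le> weight_growth b N R ^ Suc n * monomial (\<lambda>_. R) x"
    using Suc.IH mult_left_mono[OF _ weight_growth_nonneg] by (simp add: infsum_cmult_right' mult.assoc)
  finally show ?case
    using total by (auto simp: has_sum_iff)
qed

lemma jump_kernel_pow_Phi_has_sum:
  fixes z :: "nat \<Rightarrow> complex"
  assumes zR: "\<forall>i<N. cmod (z i) \<le> R" and x: "x \<in> XN N"
  shows "((\<lambda>y. of_real (jump_kernel_pow b N n x y) * Phi b N y z) has_sum
    (((\<Sum>m<N. jump_gf b (z m)) / of_nat N) ^ n * Phi b N x z)) (XN N)"
proof (induction n)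
  case 0
  show ?case
    using x by (intro has_sum_finite_neutralI[of "{x}"]) auto
next
  case (Suc n)
  define ev where "ev = (\<Sum>m<N. jump_gf b (z m)) / of_nat N"
  define M where "M = (\<Sum>\<sigma> | \<sigma> permutes {..<N}. cmod (A_coef b N z \<sigma>))"
  have z: "\<forall>i<N. cmod (of_real b * z i) < 1"
    using zR b R by (auto simp: norm_mult intro: le_less_trans[OF mult_left_mono])
  have sm: "(\<lambda>ws. jump_kernel_pow b N n x ws * monomial (\<lambda>_. R) ws) summable_on XN N"
    using jump_kernel_pow_weight_le[OF x] by blast
  show ?case
    unfolding ev_def[symmetric]
  proof (rule has_sum_swap_dominated[where
        f="\<lambda>ws y. of_real (jump_kernel_pow b N n x ws * jump_kernel b N ws y) * Phi b N y z"])
    show "(\<lambda>(ws, y). M * (jump_kernel_pow b N n x ws * (jump_kernel b N ws y * monomial (\<lambda>_. R) y)))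
        summable_on XN N \<times> XN N"
      using summable_on_cmult_right[OF jump_chain_Sigma_summable[OF sm], of M]
      by (simp add: case_prod_unfold)
  next
    fix ws y assume "y \<in> XN N"
    from norm_scaled_Phi_le[OF zR this mult_nonneg_nonneg[OF jump_kernel_pow_nonneg jump_kernel_nonneg]] b
    show "norm (of_real (jump_kernel_pow b N n x ws * jump_kernel b N ws y) * Phi b N y z)
        \<le> M * (jump_kernel_pow b N n x ws * (jump_kernel b N ws y * monomial (\<lambda>_. R) y))"
      unfolding M_def by (simp add: mult.assoc)
  next
    fix ws assume "ws \<in> XN N"
    from has_sum_cmult_right[OF jump_kernel_Phi_has_sum[OF z this], of "of_real (jump_kernel_pow b N n x ws)"]
    show "((\<lambda>y. of_real (jump_kernel_pow b N n x ws * jump_kernel b N ws y) * Phi b N y z) has_sum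
        of_real (jump_kernel_pow b N n x ws) * (ev * Phi b N ws z)) (XN N)"
      unfolding ev_def by (simp add: mult_ac)
  next
    show "((\<lambda>ws. of_real (jump_kernel_pow b N n x ws) * (ev * Phi b N ws z)) has_sum ev ^ Suc n * Phi b N x z) (XN N)"
      using has_sum_cmult_right[OF Suc.IH, of ev] unfolding ev_def by (simp add: mult_ac)
  next
    fix y assume "y \<in> XN N"
    from jump_kernel_pow_Suc_has_sum[OF this sm]
    have "((\<lambda>ws. of_real (jump_kernel_pow b N n x ws * jump_kernel b N ws y) :: complex)
        has_sum of_real (jump_kernel_pow b N (Suc n) x y)) (XN N)"
      by (simp only: has_sum_of_real_iff)
    from has_sum_cmult_left[OF this]
    show "((\<lambda>ws. of_real (jump_kernel_pow b N n x ws * jump_kernel b N ws y) * Phi b N y z) has_sum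
        of_real (jump_kernel_pow b N (Suc n) x y) * Phi b N y z) (XN N)" .
  qed
qed

lemma jump_chain_poisson_summable:
  assumes x: "x \<in> XN N" and s: "0 \<le> s"
  shows "(\<lambda>(n, y). s ^ n / fact n * (jump_kernel_pow b N n x y * monomial (\<lambda>_. R) y)) summable_on UNIV \<times> XN N"
proof -
  define I where "I n = (\<Sum>\<^sub>\<infinity>y\<in>XN N. jump_kernel_pow b N n x y * monomial (\<lambda>_. R) y)" for n
  have I: "((\<lambda>y. jump_kernel_pow b N n x y * monomial (\<lambda>_. R) y) has_sum I n) (XN N)"
    "I n \<le> weight_growth b N R ^ n * monomial (\<lambda>_. R) x" for n
    using jump_kernel_pow_weight_le[OF x, of n] unfolding I_def by (auto simp: has_sum_iff)
  have nonneg: "0 \<le> jump_kernel_pow b N n x y * monomial (\<lambda>_. R) y" for n y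
    using jump_kernel_pow_nonneg[of b N n x y] weight_pos[of y] b by (intro mult_nonneg_nonneg) simp_all
  have "(\<lambda>n. s ^ n / fact n * I n) summable_on UNIV"
  proof (rule summable_on_comparison_test)
    show "(\<lambda>n. monomial (\<lambda>_. R) x * (inverse (fact n) * (s * weight_growth b N R) ^ n)) summable_on UNIV"
      using s weight_growth_nonneg weight_pos[of x]
      by (intro summable_nonneg_imp_summable_on summable_mult summable_exp) auto
    fix n :: nat
    show "0 \<le> s ^ n / fact n * I n"
      using s has_sum_nonneg[OF I(1) nonneg] by simp
    have "s ^ n / fact n * I n \<le> s ^ n / fact n * (weight_growth b N R ^ n * monomial (\<lambda>_. R) x)"
      using I(2) s by (intro mult_left_mono) auto
    then show "s ^ n / fact n * I n \<le> monomial (\<lambda>_. R) x * (inverse (fact n) * (s * weight_growth b N R) ^ n)"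
      by (simp add: power_mult_distrib divide_inverse mult_ac)
  qed
  then show ?thesis
  proof (rule summable_on_SigmaI[rotated])
    fix n y
    show "((\<lambda>y. case (n, y) of (n, y) \<Rightarrow> s ^ n / fact n * (jump_kernel_pow b N n x y * monomial (\<lambda>_. R) y))
        has_sum s ^ n / fact n * I n) (XN N)"
      using has_sum_cmult_right[OF I(1), of "s ^ n / fact n"] by simp
    show "0 \<le> (case (n, y) of (n, y) \<Rightarrow> s ^ n / fact n * (jump_kernel_pow b N n x y * monomial (\<lambda>_. R) y))"
      using nonneg s by simp
  qed
qed

lemma trans_prob_Phi_has_sum:
  fixes z :: "nat \<Rightarrow> complex"
  assumes zR: "\<forall>i<N. cmod (z i) \<le> R" and x: "x \<in> XN N" and t: "0 \<le> t"
  shows "((\<lambda>y. of_real (trans_prob b N t x y) * Phi b N y z) has_sum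
    (exp (of_real (real N * t) * ((\<Sum>m<N. jump_gf b (z m)) / of_nat N - 1)) * Phi b N x z)) (XN N)"
proof -
  define ev where "ev = (\<Sum>m<N. jump_gf b (z m)) / of_nat N"
  define M where "M = (\<Sum>\<sigma> | \<sigma> permutes {..<N}. cmod (A_coef b N z \<sigma>))"
  define p where "p n = exp (- (real N * t)) * ((real N * t) ^ n / fact n)" for n
  have p: "0 \<le> p n" for n
    unfolding p_def using t by simp
  have Sigma: "(\<lambda>(n, y). (p n * jump_kernel_pow b N n x y) * monomial (\<lambda>_. R) y) summable_on UNIV \<times> XN N"
    using summable_on_cmult_right[OF jump_chain_poisson_summable[OF x], of "real N * t" "exp (- (real N * t))"] t
    unfolding p_def by (simp add: case_prod_unfold mult_ac)
  show ?thesis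
    unfolding ev_def[symmetric]
  proof (rule has_sum_swap_dominated[where f="\<lambda>n y. of_real (p n * jump_kernel_pow b N n x y) * Phi b N y z"])
    show "(\<lambda>(n, y). M * (p n * jump_kernel_pow b N n x y * monomial (\<lambda>_. R) y)) summable_on UNIV \<times> XN N"
      using summable_on_cmult_right[OF Sigma, of M] by (simp add: case_prod_unfold)
  next
    fix n y assume "y \<in> XN N"
    from norm_scaled_Phi_le[OF zR this mult_nonneg_nonneg[OF p jump_kernel_pow_nonneg]] b
    show "norm (of_real (p n * jump_kernel_pow b N n x y) * Phi b N y z)
        \<le> M * (p n * jump_kernel_pow b N n x y * monomial (\<lambda>_. R) y)"
      unfolding M_def by (simp add: mult.assoc)
  next
    fix n
    from has_sum_cmult_right[OF jump_kernel_pow_Phi_has_sum[OF zR x], of "of_real (p n)" n]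
    show "((\<lambda>y. of_real (p n * jump_kernel_pow b N n x y) * Phi b N y z) has_sum
        of_real (p n) * ev ^ n * Phi b N x z) (XN N)"
      unfolding ev_def by (simp add: mult_ac)
  next
    show "((\<lambda>n. of_real (p n) * ev ^ n * Phi b N x z) has_sum exp (of_real (real N * t) * (ev - 1)) * Phi b N x z) UNIV"
      unfolding p_def by (intro has_sum_cmult_left has_sum_poisson_exp)
  next
    fix y assume y: "y \<in> XN N"
    from summable_on_Sigma_column[OF Sigma y weight_pos]
    have "((\<lambda>n. p n * jump_kernel_pow b N n x y) has_sum trans_prob b N t x y) UNIV"
      unfolding trans_prob_def p_def by (simp add: has_sum_iff mult_ac)
    then have "((\<lambda>n. of_real (p n * jump_kernel_pow b N n x y) :: complex) has_sum of_real (trans_prob b N t x y)) UNIV"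
      by (simp only: has_sum_of_real_iff)
    from has_sum_cmult_left[OF this]
    show "((\<lambda>n. of_real (p n * jump_kernel_pow b N n x y) * Phi b N y z) has_sum
        of_real (trans_prob b N t x y) * Phi b N y z) UNIV" .
  qed
qed

end

lemma exists_weight_bound:
  fixes z :: "nat \<Rightarrow> complex"
  assumes "0 \<le> b" "b < 1" "\<And>i. i < N \<Longrightarrow> cmod (of_real b * z i) < 1"
  obtains R where "1 \<le> R" "b * R < 1" "\<forall>i<N. cmod (z i) \<le> R"
proof
  define S where "S = insert 1 ((\<lambda>i. cmod (z i)) ` {..<N})"
  have "finite S"
    unfolding S_def by simp
  then show "1 \<le> Max S" "\<forall>i<N. cmod (z i) \<le> Max S"
    unfolding S_def by auto
  have "Max S \<in> S"
    using \<open>finite S\<close> by (rule Max_in) (simp add: S_def)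
  then show "b * Max S < 1"
    using assms unfolding S_def by (auto simp: norm_mult)
qed

lemma Poisson_exponent_eq:
  fixes z :: "nat \<Rightarrow> complex"
  assumes "0 < N" "\<And>i. i < N \<Longrightarrow> 1 - of_real b * z i \<noteq> 0"
  shows "of_real (real N * t) * ((\<Sum>i<N. jump_gf b (z i)) / of_nat N - 1)
    = - of_real t * (\<Sum>i<N. (1 - z i) / (1 - of_real b * z i))"
proof -
  have "(\<Sum>i<N. (1 - z i) / (1 - of_real b * z i)) = (\<Sum>i<N. 1 - jump_gf b (z i))"
    using assms(2) by (intro sum.cong) (simp_all add: one_minus_jump_gf)
  also have "\<dots> = of_nat N - (\<Sum>i<N. jump_gf b (z i))"
    by (simp add: sum_subtractf)
  finally have sum: "(\<Sum>i<N. (1 - z i) / (1 - of_real b * z i)) = of_nat N - (\<Sum>i<N. jump_gf b (z i))" .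
  have "of_real (real N * t) * ((\<Sum>i<N. jump_gf b (z i)) / of_nat N - 1)
      = - of_real t * (of_nat N - (\<Sum>i<N. jump_gf b (z i)))"
    using assms(1) by (simp add: field_simps)
  then show ?thesis
    by (simp only: sum)
qed

theorem proposition3p1:
  fixes b :: real and N :: nat and z :: "nat \<Rightarrow> complex" and t :: real and xs :: "nat list"
  assumes "0 < b" and "b < 1" and "N > 0"
    and "\<And>i. i < N \<Longrightarrow> cmod (complex_of_real b * z i) < 1"
    and "\<And>i j. i < N \<Longrightarrow> j < N \<Longrightarrow> i \<noteq> j \<Longrightarrow> Afac b (z i) (z j) \<noteq> 0"
    and "t \<ge> 0" and "xs \<in> XN N"
  shows "((\<lambda>ys. complex_of_real (trans_prob b N t xs ys) * Phi b N ys z) has_sum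
           (exp (- complex_of_real t * (\<Sum>i<N. (1 - z i) / (1 - complex_of_real b * z i)))
             * Phi b N xs z)) (XN N)"
proof -
  obtain R where R: "1 \<le> R" "b * R < 1" "\<forall>i<N. cmod (z i) \<le> R"
    using exists_weight_bound[of b N z] assms(1,2,4) by auto
  have "of_real (real N * t) * ((\<Sum>i<N. jump_gf b (z i)) / of_nat N - 1)
      = - of_real t * (\<Sum>i<N. (1 - z i) / (1 - of_real b * z i))"
    by (rule Poisson_exponent_eq[OF assms(3) one_minus_nonzero[OF assms(4)]])
  with trans_prob_Phi_has_sum[of b R N z xs t] assms(1,2,3,6,7) R show ?thesis
    by simp
qed

end
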